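(* Let $\mathfrak g$ be a finite-dimensional complex simple Lie algebra, $\lambda\in P^+$, and $\boldsymbol\lambda=(\lambda_1,\lambda_2),\boldsymbol\mu=(\mu_1,\mu_2)\in P^+(\lambda,2)$ with $\boldsymbol\lambda\prec\boldsymbol\mu$. Suppose there exist $w\in W$ and $i_0\in I$ such that $w(\lambda_1-\lambda_2)\in P^+$ and $$w(\lambda_1-\mu_1)(h_{i_0})\cdot w(\mu_1-\lambda_2)(h_{i_0})>0.$$ Then $(\lambda_1-w^{-1}\omega_{i_0},\ \lambda_2+w^{-1}\omega_{i_0})\in P^+(\lambda,2)$ and $$\boldsymbol\lambda\prec(\lambda_1-w^{-1}\omega_{i_0},\ \lambda_2+w^{-1}\omega_{i_0})\preceq\boldsymbol\mu.$$
   Context: $\mathfrak g$ has simple roots $\alpha_i$ ($i\in I$), fundamental weights $\omega_i$, positive roots $R^+$, coroots $h_\alpha$, $h_i=h_{\alpha_i}$, Weyl group $W$, dominant integral weights $P^+$. $P^+(\lambda,2)=\{(\lambda_1,\lambda_2)\in(P^+)^2:\lambda_1+\lambda_2=\lambda\}$; $(\lambda_1,\lambda_2)\preceq(\mu_1,\mu_2)$ means $\min\{\lambda_1(h_\alpha),\lambda_2(h_\alpha)\}\le\min\{\mu_1(h_\alpha),\mu_2(h_\alpha)\}$ for all $\alpha\in R^+$; $\sim$ means equality of these minima for all $\alpha\in R^+$; $\boldsymbol\lambda\prec\boldsymbol\mu$ means $\boldsymbol\lambda\preceq\boldsymbol\mu$ and not $\boldsymbol\lambda\sim\boldsymbol\mu$.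 *)

theory Defs
  imports "HOL-Analysis.Analysis"
begin

text \<open>Root-system model of a finite-dimensional complex simple Lie algebra g:
  weights live in a real Euclidean space 'a (the real span of the roots, with a
  Weyl-group invariant inner product); the root system R of g is a finite,
  reduced, crystallographic, irreducible root system spanning 'a.
  For a weight x and a root a, x(h_a) = 2 (x . a) / (a . a).\<close>

definition pair :: "'a::real_inner \<Rightarrow> 'a \<Rightarrow> real" where
  "pair x a = 2 * (x \<bullet> a) / (a \<bullet> a)"

definition refl :: "'a::real_inner \<Rightarrow> 'a \<Rightarrow> 'a" where
  "refl a x = x - pair x a *\<^sub>R a"

definition root_system :: "'a::euclidean_space set \<Rightarrow> bool" where
  "root_system R \<longleftrightarrow> finite R \<and> 0 \<notin> R \<and> span R = UNIV \<and>
     (\<forall>a\<in>R. \<forall>b\<in>R. refl a b \<in> R \<and> pair b a \<in> \<int>) \<and>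
     (\<forall>a\<in>R. \<forall>c. c *\<^sub>R a \<in> R \<longrightarrow> c = 1 \<or> c = -1)"

definition irreducible_rs :: "'a::euclidean_space set \<Rightarrow> bool" where
  "irreducible_rs R \<longleftrightarrow> \<not> (\<exists>A B. A \<noteq> {} \<and> B \<noteq> {} \<and> A \<union> B = R \<and> A \<inter> B = {} \<and>
       (\<forall>a\<in>A. \<forall>b\<in>B. a \<bullet> b = 0))"

text \<open>A base (set of simple roots) of R; the index set I is identified with the base.\<close>
definition is_base :: "'a::euclidean_space set \<Rightarrow> 'a set \<Rightarrow> bool" where
  "is_base R S \<longleftrightarrow> S \<subseteq> R \<and> independent S \<and>
     (\<forall>b\<in>R. \<exists>c. b = (\<Sum>a\<in>S. c a *\<^sub>R a) \<and>
        ((\<forall>a\<in>S. c a \<in> \<nat>) \<or> (\<forall>a\<in>S. - c a \<in> \<nat>)))"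

definition pos_roots :: "'a::euclidean_space set \<Rightarrow> 'a set \<Rightarrow> 'a set" where
  "pos_roots R S = {b\<in>R. \<exists>c. b = (\<Sum>a\<in>S. c a *\<^sub>R a) \<and> (\<forall>a\<in>S. c a \<in> \<nat>)}"

definition fund_weight :: "'a::euclidean_space set \<Rightarrow> 'a \<Rightarrow> 'a" where
  "fund_weight S i = (THE w. \<forall>j\<in>S. pair w j = (if j = i then 1 else 0))"

definition dominant :: "'a::euclidean_space set \<Rightarrow> 'a \<Rightarrow> bool" where
  "dominant S x \<longleftrightarrow> (\<forall>a\<in>S. pair x a \<in> \<nat>)"

inductive_set weyl_group :: "'a::euclidean_space set \<Rightarrow> ('a \<Rightarrow> 'a) set" for R where
  weyl_id: "id \<in> weyl_group R"
| weyl_step: "w \<in> weyl_group R \<Longrightarrow> a \<in> R \<Longrightarrow> refl a \<circ> w \<in> weyl_group R"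

definition P2 :: "'a::euclidean_space set \<Rightarrow> 'a \<Rightarrow> ('a \<times> 'a) set" where
  "P2 S l = {(l1, l2). dominant S l1 \<and> dominant S l2 \<and> l1 + l2 = l}"

definition pmin :: "'a::euclidean_space \<times> 'a \<Rightarrow> 'a \<Rightarrow> real" where
  "pmin p a = min (pair (fst p) a) (pair (snd p) a)"

definition preceq :: "'a::euclidean_space set \<Rightarrow> 'a set \<Rightarrow> 'a \<times> 'a \<Rightarrow> 'a \<times> 'a \<Rightarrow> bool" where
  "preceq R S p q \<longleftrightarrow> (\<forall>a\<in>pos_roots R S. pmin p a \<le> pmin q a)"

definition simeq :: "'a::euclidean_space set \<Rightarrow> 'a set \<Rightarrow> 'a \<times> 'a \<Rightarrow> 'a \<times> 'a \<Rightarrow> bool" where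
  "simeq R S p q \<longleftrightarrow> (\<forall>a\<in>pos_roots R S. pmin p a = pmin q a)"

definition prec :: "'a::euclidean_space set \<Rightarrow> 'a set \<Rightarrow> 'a \<times> 'a \<Rightarrow> 'a \<times> 'a \<Rightarrow> bool" where
  "prec R S p q \<longleftrightarrow> preceq R S p q \<and> \<not> simeq R S p q"

end

theory Submission
  imports Defs
begin

text \<open>Proposition 5.4.  For pairs with a common sum, min(x(h), y(h)) =
  ((x+y)(h) - |(x-y)(h)|)/2, so \<preceq> compares the absolute pairings of the differences
  with the roots.  Applying w, which permutes the roots and preserves the pairing, the
  three pairs of the statement have differences a+b, b-a and a+b-2 omega_i0, where
  a = w(l1 - m1), b = w(m1 - l2).  From |b-a| \<le> |a+b| on all roots and dominance of a+b,
  a and b lie in the dominant chamber, and the hypothesis makes a(h_i0), b(h_i0) \<ge> 1.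
  Since coroots of positive roots are non-negative combinations of simple coroots,
  0 \<le> omega_i0 \<le> a, b on positive roots; hence |b-a| \<le> |a+b-2 omega_i0| \<le> |a+b|, strictly
  at i0.  Dominance of the new pair uses integrality: weights integral on the simple
  roots are integral on all roots, proved by induction on the height of roots.\<close>

lemma pair_add: "pair (x + y) a = pair x a + pair y a"
  unfolding pair_def by (simp add: inner_add_left add_divide_distrib)

lemma pair_diff: "pair (x - y) a = pair x a - pair y a"
  unfolding pair_def by (simp add: inner_diff_left diff_divide_distrib)

lemma pair_scaleR: "pair (t *\<^sub>R x) a = t * pair x a"
  unfolding pair_def by simp

lemma pair_uminus_root: "pair x (- a) = - pair x a"
  unfolding pair_def by simp

lemma pair_self: "a \<noteq> 0 \<Longrightarrow> pair a a = 2"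
  unfolding pair_def by simp

lemma inner_eq_pair: "a \<noteq> 0 \<Longrightarrow> x \<bullet> a = pair x a * (a \<bullet> a) / 2"
  unfolding pair_def by simp

lemma pair_orthogonal_transformation:
  "orthogonal_transformation f \<Longrightarrow> pair (f x) (f a) = pair x a"
  unfolding pair_def orthogonal_transformation_def by simp

lemma pair_inv_orthogonal_transformation:
  fixes f :: "'a::euclidean_space \<Rightarrow> 'a"
  assumes "orthogonal_transformation f"
  shows "pair (inv f x) a = pair x (f a)"
  using pair_orthogonal_transformation[OF assms, of "inv f x" a]
    orthogonal_transformation_surj[OF assms] by (simp add: surj_f_inv_f)

lemma pmin_eq: "pmin (p, q) a = (pair (p + q) a - \<bar>pair (p - q) a\<bar>) / 2"
  unfolding pmin_def by (simp add: pair_add pair_diff min_def abs_if)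

lemma refl_orthogonal_transformation:
  assumes "a \<noteq> 0"
  shows "orthogonal_transformation (refl a)"
proof -
  have "linear (refl a)"
    unfolding refl_def pair_def
    by (rule linearI) (auto simp: inner_add_left algebra_simps add_divide_distrib)
  moreover have "refl a x \<bullet> refl a y = x \<bullet> y" for x y
    using assms unfolding refl_def pair_def
    by (simp add: inner_diff_left inner_diff_right field_simps inner_commute)
  ultimately show ?thesis unfolding orthogonal_transformation_def by blast
qed

lemma refl_refl: "a \<noteq> 0 \<Longrightarrow> refl a (refl a x) = x"
  unfolding refl_def by (simp add: pair_diff pair_scaleR pair_self)

lemma root_nonzero: "root_system R \<Longrightarrow> a \<in> R \<Longrightarrow> a \<noteq> 0"
  unfolding root_system_def by auto

lemma root_refl: "root_system R \<Longrightarrow> a \<in> R \<Longrightarrow> b \<in> R \<Longrightarrow> refl a b \<in> R"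
  unfolding root_system_def by auto

lemma root_pair_Ints: "root_system R \<Longrightarrow> a \<in> R \<Longrightarrow> b \<in> R \<Longrightarrow> pair b a \<in> \<int>"
  unfolding root_system_def by auto

lemma root_multiple: "root_system R \<Longrightarrow> a \<in> R \<Longrightarrow> c *\<^sub>R a \<in> R \<Longrightarrow> c = 1 \<or> c = -1"
  unfolding root_system_def by blast

lemma root_uminus:
  assumes "root_system R" and "a \<in> R"
  shows "- a \<in> R"
proof -
  have "refl a a = - a"
    using root_nonzero[OF assms] unfolding refl_def by (simp add: pair_self scaleR_2)
  then show ?thesis using root_refl[OF assms assms(2)] by simp
qed

lemma refl_image_roots:
  assumes R: "root_system R" and a: "a \<in> R"
  shows "refl a ` R = R"
proof
  show "refl a ` R \<subseteq> R" using root_refl[OF R a] by blast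
  show "R \<subseteq> refl a ` R"
    using root_refl[OF R a] refl_refl[OF root_nonzero[OF R a]] by (metis image_eqI subsetI)
qed

lemma weyl_group_orthogonal:
  assumes R: "root_system R" and w: "w \<in> weyl_group R"
  shows "orthogonal_transformation w \<and> w ` R = R"
  using w
proof induction
  case weyl_id
  then show ?case by (simp add: id_def)
next
  case (weyl_step w a)
  have "orthogonal_transformation (refl a \<circ> w)"
    using weyl_step refl_orthogonal_transformation[OF root_nonzero[OF R]]
    by (simp add: orthogonal_transformation_compose)
  moreover have "(refl a \<circ> w) ` R = R"
    using weyl_step refl_image_roots[OF R] by (simp only: image_comp[symmetric])
  ultimately show ?case ..
qed

lemma weyl_transfer:
  assumes "orthogonal_transformation w" and "w ` R = R"
  shows "(\<forall>g\<in>R. P (pair (w x) g) (pair (w y) g)) \<longleftrightarrow> (\<forall>g\<in>R. P (pair x g) (pair y g))"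
proof -
  have "(\<forall>g\<in>R. P (pair (w x) g) (pair (w y) g)) \<longleftrightarrow>
        (\<forall>g\<in>w ` R. P (pair (w x) g) (pair (w y) g))"
    using assms(2) by simp
  also have "\<dots> \<longleftrightarrow> (\<forall>g\<in>R. P (pair x g) (pair y g))"
    by (simp add: pair_orthogonal_transformation[OF assms(1)])
  finally show ?thesis .
qed

lemma base_subset: "is_base R S \<Longrightarrow> S \<subseteq> R"
  unfolding is_base_def by auto

lemma base_finite: "root_system R \<Longrightarrow> is_base R S \<Longrightarrow> finite S"
  unfolding root_system_def is_base_def by (auto intro: finite_subset)

lemma simple_root_nonzero: "root_system R \<Longrightarrow> is_base R S \<Longrightarrow> a \<in> S \<Longrightarrow> a \<noteq> 0"
  using root_nonzero base_subset by blast

lemma pos_roots_subset: "pos_roots R S \<subseteq> R"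
  unfolding pos_roots_def by auto

lemma independent_coeff_unique:
  assumes "finite S" and "independent S"
    and "(\<Sum>a\<in>S. c a *\<^sub>R a) = (\<Sum>a\<in>S. d a *\<^sub>R a)" and "a \<in> S"
  shows "c a = d a"
proof -
  have "(\<Sum>a\<in>S. (c a - d a) *\<^sub>R a) = 0"
    using assms(3) by (simp add: scaleR_diff_left sum_subtractf)
  moreover have "\<forall>u. (\<forall>v\<in>S. u v = 0) \<or> (\<Sum>v\<in>S. u v *\<^sub>R v) \<noteq> 0"
    using assms(1,2) dependent_finite[of S] by auto
  ultimately have "\<forall>v\<in>S. c v - d v = 0" by metis
  then show ?thesis using assms(4) by auto
qed

lemma sum_delta_scaleR:
  fixes S :: "'a::real_vector set"
  assumes "finite S" and "j \<in> S"
  shows "(\<Sum>a\<in>S. (if a = j then p else 0) *\<^sub>R a) = p *\<^sub>R j"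
proof -
  have "(\<Sum>a\<in>S. (if a = j then p else 0) *\<^sub>R a) = (\<Sum>a\<in>S. if a = j then p *\<^sub>R j else 0)"
    by (rule sum.cong) auto
  also have "\<dots> = p *\<^sub>R j" using assms by simp
  finally show ?thesis .
qed

lemma root_pos_or_neg:
  assumes R: "root_system R" and B: "is_base R S" and g: "g \<in> R"
  shows "g \<in> pos_roots R S \<or> - g \<in> pos_roots R S"
proof -
  obtain c where c: "g = (\<Sum>a\<in>S. c a *\<^sub>R a)"
      and sign: "(\<forall>a\<in>S. c a \<in> \<nat>) \<or> (\<forall>a\<in>S. - c a \<in> \<nat>)"
    using B g unfolding is_base_def by blast
  have neg: "- g = (\<Sum>a\<in>S. (- c a) *\<^sub>R a)" using c by (simp add: sum_negf)
  from sign show ?thesis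
  proof
    assume "\<forall>a\<in>S. c a \<in> \<nat>"
    then have "g \<in> pos_roots R S" using c g unfolding pos_roots_def by blast
    then show ?thesis ..
  next
    assume "\<forall>a\<in>S. - c a \<in> \<nat>"
    then have "- g \<in> pos_roots R S"
      using neg root_uminus[OF R g] unfolding pos_roots_def
      by (intro CollectI conjI exI[of _ "\<lambda>a. - c a"]) auto
    then show ?thesis ..
  qed
qed

lemma simple_root_positive:
  assumes R: "root_system R" and B: "is_base R S" and j: "j \<in> S"
  shows "j \<in> pos_roots R S"
proof -
  have "j = (\<Sum>a\<in>S. (if a = j then 1 else 0) *\<^sub>R a)"
    using sum_delta_scaleR[OF base_finite[OF R B] j, of 1] by simp
  moreover have "\<forall>a\<in>S. (if a = j then 1 else (0::real)) \<in> \<nat>" by auto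
  ultimately show ?thesis using j base_subset[OF B] unfolding pos_roots_def
    by (intro CollectI conjI exI[of _ "\<lambda>a. if a = j then 1 else 0"]) auto
qed

lemma base_span: "root_system R \<Longrightarrow> is_base R S \<Longrightarrow> span S = UNIV"
proof -
  assume R: "root_system R" and B: "is_base R S"
  have "R \<subseteq> span S"
  proof
    fix g assume "g \<in> R"
    then obtain c where "g = (\<Sum>a\<in>S. c a *\<^sub>R a)" using B unfolding is_base_def by blast
    then show "g \<in> span S" by (simp add: span_sum span_scale span_base)
  qed
  then have "span R \<subseteq> span S" by (metis span_mono span_span)
  then show ?thesis using R unfolding root_system_def by auto
qed

lemma inner_prescribed_on_independent:
  fixes S :: "'a::euclidean_space set"
  assumes "independent S"
  obtains x where "\<And>j. j \<in> S \<Longrightarrow> x \<bullet> j = t j"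
proof -
  obtain g where g: "linear g" "\<And>j. j \<in> S \<Longrightarrow> g j = t j"
    using linear_independent_extend[OF assms, of t] by blast
  define x where "x = (\<Sum>b\<in>Basis. g b *\<^sub>R b)"
  have xg: "x \<bullet> y = g y" for y
  proof -
    have "g y = g (\<Sum>b\<in>Basis. (y \<bullet> b) *\<^sub>R b)" by (simp add: euclidean_representation)
    also have "\<dots> = (\<Sum>b\<in>Basis. (y \<bullet> b) * g b)" using g(1) by (simp add: linear_sum linear_scale)
    also have "\<dots> = x \<bullet> y" unfolding x_def inner_sum_left by (simp add: inner_commute mult.commute)
    finally show ?thesis by simp
  qed
  show thesis by (rule that[of x]) (simp add: xg g(2))
qed

lemma inner_determined_by_spanning:
  assumes "span S = UNIV" and "\<And>j. j \<in> S \<Longrightarrow> x \<bullet> j = y \<bullet> j"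
  shows "x = y"
proof -
  have "orthogonal (x - y) j" if "j \<in> S" for j
    using assms(2)[OF that] unfolding orthogonal_def by (simp add: inner_diff_left)
  then have "orthogonal (x - y) (x - y)"
    using orthogonal_to_span[of "x - y" S] assms(1) by blast
  then show ?thesis unfolding orthogonal_def by simp
qed

lemma fund_weight_pair:
  assumes R: "root_system R" and B: "is_base R S" and j: "j \<in> S"
  shows "pair (fund_weight S i) j = (if j = i then 1 else 0)"
proof -
  let ?P = "\<lambda>w. \<forall>j\<in>S. pair w j = (if j = i then 1 else 0)"
  have nz: "\<And>j. j \<in> S \<Longrightarrow> j \<noteq> 0" using simple_root_nonzero[OF R B] .
  have indep: "independent S" using B unfolding is_base_def by blast
  obtain x where x: "\<And>j. j \<in> S \<Longrightarrow> x \<bullet> j = (if j = i then 1 else 0) * (j \<bullet> j) / 2"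
    using inner_prescribed_on_independent[OF indep, of "\<lambda>j. (if j = i then 1 else 0) * (j \<bullet> j) / 2"]
    by blast
  have Px: "?P x"
  proof
    fix j assume j: "j \<in> S"
    show "pair x j = (if j = i then 1 else 0)"
      using x[OF j] nz[OF j] unfolding pair_def by (cases "j = i") auto
  qed
  have unique: "y = x" if Py: "?P y" for y
  proof (rule inner_determined_by_spanning[OF base_span[OF R B]])
    fix j assume j: "j \<in> S"
    show "y \<bullet> j = x \<bullet> j"
      using inner_eq_pair[OF nz[OF j], of y] inner_eq_pair[OF nz[OF j], of x] Py Px j by simp
  qed
  have "?P (THE w. ?P w)" by (rule theI[of ?P x, OF Px unique])
  then show ?thesis using j unfolding fund_weight_def by blast
qed

lemma Nats_nonneg: "(t::real) \<in> \<nat> \<Longrightarrow> 0 \<le> t"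
  by (auto elim: Nats_cases)

lemma root_coeffs_sign:
  assumes R: "root_system R" and B: "is_base R S" and g: "g \<in> R"
    and c: "g = (\<Sum>a\<in>S. c a *\<^sub>R a)"
  shows "(\<forall>a\<in>S. c a \<in> \<nat>) \<or> (\<forall>a\<in>S. - c a \<in> \<nat>)"
proof -
  obtain d where d: "g = (\<Sum>a\<in>S. d a *\<^sub>R a)" "(\<forall>a\<in>S. d a \<in> \<nat>) \<or> (\<forall>a\<in>S. - d a \<in> \<nat>)"
    using B g unfolding is_base_def by blast
  have indep: "independent S" using B unfolding is_base_def by blast
  have "c a = d a" if "a \<in> S" for a
    using independent_coeff_unique[OF base_finite[OF R B] indep, of c d a] c d(1) that by simp
  then show ?thesis using d(2) by auto
qed

lemma exists_acute_simple_root: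
  fixes \<beta> :: "'a::real_inner"
  assumes "\<beta> \<noteq> 0" and "\<beta> = (\<Sum>a\<in>S. c a *\<^sub>R a)" and "\<forall>a\<in>S. 0 \<le> c a"
  obtains j where "j \<in> S" "0 < c j" "0 < j \<bullet> \<beta>"
proof -
  have "0 < \<beta> \<bullet> \<beta>" using assms(1) by simp
  also have "\<beta> \<bullet> \<beta> = (\<Sum>a\<in>S. c a * (a \<bullet> \<beta>))"
    by (subst (1) assms(2)) (simp add: inner_sum_left)
  finally have pos: "0 < (\<Sum>a\<in>S. c a * (a \<bullet> \<beta>))" .
  have "\<exists>a\<in>S. 0 < c a * (a \<bullet> \<beta>)"
  proof (rule ccontr)
    assume "\<not> ?thesis"
    then have "(\<Sum>a\<in>S. c a * (a \<bullet> \<beta>)) \<le> 0" by (intro sum_nonpos) (auto simp: not_less)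
    then show False using pos by linarith
  qed
  then obtain j where j: "j \<in> S" "0 < c j * (j \<bullet> \<beta>)" by blast
  have "0 < c j" using j assms(3) by (cases "c j = 0") auto
  then have "0 < j \<bullet> \<beta>" using j(2) zero_less_mult_pos by blast
  then show thesis using that j(1) \<open>0 < c j\<close> by blast
qed

lemma positive_root_support:
  assumes R: "root_system R" and B: "is_base R S" and \<beta>: "\<beta> \<in> R" "\<beta> \<notin> S"
    and c: "\<beta> = (\<Sum>a\<in>S. c a *\<^sub>R a)" "\<forall>a\<in>S. 0 \<le> c a" and j: "j \<in> S"
  shows "\<exists>k\<in>S. k \<noteq> j \<and> 0 < c k"
proof (rule ccontr)
  assume "\<not> ?thesis"
  then have "\<beta> = (\<Sum>a\<in>S. (if a = j then c j else 0) *\<^sub>R a)"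
    unfolding c(1) using c(2) by (intro sum.cong) force+
  then have \<beta>j: "\<beta> = c j *\<^sub>R j" using sum_delta_scaleR[OF base_finite[OF R B] j] by simp
  moreover have "j \<in> R" using base_subset[OF B] j by blast
  ultimately have "c j = 1 \<or> c j = -1" using root_multiple[OF R] \<beta>(1) by metis
  then have "\<beta> = j" using \<beta>j c(2) j by auto
  then show False using \<beta>(2) j by simp
qed

lemma reflect_positive_root:
  assumes R: "root_system R" and B: "is_base R S" and \<beta>: "\<beta> \<in> R" "\<beta> \<notin> S"
    and c: "\<beta> = (\<Sum>a\<in>S. c a *\<^sub>R a)" "\<forall>a\<in>S. c a \<in> \<nat>"
  obtains j c' where "j \<in> S" "refl j \<beta> \<in> R" "refl j \<beta> = (\<Sum>a\<in>S. c' a *\<^sub>R a)"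
    "\<forall>a\<in>S. c' a \<in> \<nat>" "sum c' S + 1 \<le> sum c S"
proof -
  have fin: "finite S" using base_finite[OF R B] .
  have c0: "\<forall>a\<in>S. 0 \<le> c a" using c(2) Nats_nonneg by blast
  obtain j where j: "j \<in> S" "0 < c j" "0 < j \<bullet> \<beta>"
    using exists_acute_simple_root[OF root_nonzero[OF R \<beta>(1)] c(1) c0] by blast
  have jR: "j \<in> R" using base_subset[OF B] j(1) by blast
  define p where "p = pair \<beta> j"
  have "p \<in> \<int>" unfolding p_def using root_pair_Ints[OF R jR \<beta>(1)] .
  moreover have "0 < p"
    unfolding p_def pair_def using j(3) root_nonzero[OF R jR] by (simp add: inner_commute)
  ultimately have p1: "1 \<le> p" by (auto elim!: Ints_cases)
  define c' where "c' a = c a - (if a = j then p else 0)" for a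
  have "refl j \<beta> = \<beta> - p *\<^sub>R j" unfolding refl_def p_def ..
  also have "\<dots> = (\<Sum>a\<in>S. c' a *\<^sub>R a)"
    unfolding c'_def by (simp add: scaleR_diff_left sum_subtractf sum_delta_scaleR[OF fin j(1)] c(1))
  finally have refl_c': "refl j \<beta> = (\<Sum>a\<in>S. c' a *\<^sub>R a)" .
  have R': "refl j \<beta> \<in> R" using root_refl[OF R jR \<beta>(1)] .
  obtain k where k: "k \<in> S" "k \<noteq> j" "0 < c k"
    using positive_root_support[OF R B \<beta> c(1) c0 j(1)] by blast
  have "\<not> (\<forall>a\<in>S. - c' a \<in> \<nat>)"
    using k Nats_nonneg[of "- c' k"] unfolding c'_def by auto
  then have "\<forall>a\<in>S. c' a \<in> \<nat>" using root_coeffs_sign[OF R B R' refl_c'] by blast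
  moreover have "sum c' S = sum c S - p"
    unfolding c'_def using fin j(1) by (simp add: sum_subtractf)
  ultimately show thesis using that[OF j(1) R' refl_c'] p1 by simp
qed

text \<open>Weights with integral pairings against the simple roots have integral pairings
  against all roots; proved by induction on the height of a positive root, moving the
  weight along with the root by the same simple reflection.\<close>

definition integral_on :: "'a::real_inner set \<Rightarrow> 'a \<Rightarrow> bool" where
  "integral_on A x \<longleftrightarrow> (\<forall>a\<in>A. pair x a \<in> \<int>)"

lemma integral_on_refl_simple:
  assumes R: "root_system R" and B: "is_base R S" and j: "j \<in> S" and x: "integral_on S x"
  shows "integral_on S (refl j x)"
  unfolding integral_on_def
proof
  fix k assume k: "k \<in> S"
  have "pair (refl j x) k = pair x k - pair x j * pair j k"
    unfolding refl_def by (simp add: pair_diff pair_scaleR)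
  moreover have "pair j k \<in> \<int>" using root_pair_Ints[OF R] base_subset[OF B] j k by blast
  ultimately show "pair (refl j x) k \<in> \<int>" using x j k unfolding integral_on_def by simp
qed

lemma integral_on_positive_root:
  assumes R: "root_system R" and B: "is_base R S"
    and \<beta>: "\<beta> \<in> R" "\<beta> = (\<Sum>a\<in>S. c a *\<^sub>R a)" "\<forall>a\<in>S. c a \<in> \<nat>" "sum c S < real n"
    and x: "integral_on S x"
  shows "pair x \<beta> \<in> \<int>"
  using \<beta> x
proof (induction n arbitrary: \<beta> c x)
  case 0
  have "0 \<le> sum c S" using "0.prems"(3) Nats_nonneg by (intro sum_nonneg) auto
  then show ?case using "0.prems"(4) by simp
next
  case (Suc n)
  show ?case
  proof (cases "\<beta> \<in> S")
    case True
    then show ?thesis using Suc.prems(5) unfolding integral_on_def by blast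
  next
    case False
    obtain j c' where j: "j \<in> S" "refl j \<beta> \<in> R" "refl j \<beta> = (\<Sum>a\<in>S. c' a *\<^sub>R a)"
        "\<forall>a\<in>S. c' a \<in> \<nat>" "sum c' S + 1 \<le> sum c S"
      using reflect_positive_root[OF R B Suc.prems(1) False Suc.prems(2,3)] by blast
    have "pair (refl j x) (refl j \<beta>) \<in> \<int>"
      using Suc.IH[OF j(2,3,4)] j(5) Suc.prems(4) integral_on_refl_simple[OF R B j(1) Suc.prems(5)]
      by simp
    moreover have "pair (refl j x) (refl j \<beta>) = pair x \<beta>"
      by (rule pair_orthogonal_transformation[OF
            refl_orthogonal_transformation[OF simple_root_nonzero[OF R B j(1)]]])
    ultimately show ?thesis by simp
  qed
qed

lemma integral_on_roots:
  assumes R: "root_system R" and B: "is_base R S" and x: "integral_on S x"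
  shows "integral_on R x"
proof -
  have pos: "pair x h \<in> \<int>" if h: "h \<in> pos_roots R S" for h
  proof -
    obtain c where c: "h \<in> R" "h = (\<Sum>a\<in>S. c a *\<^sub>R a)" "\<forall>a\<in>S. c a \<in> \<nat>"
      using h unfolding pos_roots_def by blast
    have "sum c S < real (nat \<lceil>sum c S\<rceil> + 1)" by linarith
    then show ?thesis by (rule integral_on_positive_root[OF R B c(1,2,3) _ x])
  qed
  have "pair x g \<in> \<int>" if g: "g \<in> R" for g
    using root_pos_or_neg[OF R B g] pos[of g] pos[of "- g"] by (auto simp: pair_uminus_root)
  then show ?thesis unfolding integral_on_def by blast
qed

text \<open>The pairing with a positive root h is a non-negative combination of the
  pairings with the simple roots (the coroot h^\<or> is a non-negative combination of
  simple coroots).\<close>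

lemma positive_root_pair_expansion:
  assumes R: "root_system R" and B: "is_base R S" and h: "h \<in> pos_roots R S"
  obtains k where "\<forall>a\<in>S. 0 \<le> k a" "\<And>y. pair y h = (\<Sum>a\<in>S. k a * pair y a)"
proof -
  obtain c where c: "h \<in> R" "h = (\<Sum>a\<in>S. c a *\<^sub>R a)" "\<forall>a\<in>S. c a \<in> \<nat>"
    using h unfolding pos_roots_def by blast
  have nz: "\<And>a. a \<in> S \<Longrightarrow> a \<noteq> 0" using simple_root_nonzero[OF R B] .
  have hnz: "h \<noteq> 0" using root_nonzero[OF R c(1)] .
  define k where "k a = c a * (a \<bullet> a) / (h \<bullet> h)" for a
  have "0 \<le> k a" if "a \<in> S" for a using c(3) that Nats_nonneg unfolding k_def by auto
  moreover have "pair y h = (\<Sum>a\<in>S. k a * pair y a)" for y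
  proof -
    have "y \<bullet> h = (\<Sum>a\<in>S. c a * (y \<bullet> a))"
      by (subst c(2)) (simp add: inner_sum_right)
    also have "\<dots> = (\<Sum>a\<in>S. c a * (pair y a * (a \<bullet> a) / 2))"
      by (rule sum.cong[OF refl]) (metis inner_eq_pair nz)
    finally have "y \<bullet> h = (\<Sum>a\<in>S. c a * (pair y a * (a \<bullet> a) / 2))" .
    then have "pair y h = (\<Sum>a\<in>S. 2 * (c a * (pair y a * (a \<bullet> a) / 2)) / (h \<bullet> h))"
      unfolding pair_def[of y h] by (simp only: sum_distrib_left sum_divide_distrib)
    also have "\<dots> = (\<Sum>a\<in>S. k a * pair y a)"
      unfolding k_def using hnz by (intro sum.cong[OF refl]) (simp add: field_simps)
    finally show ?thesis .
  qed
  ultimately show thesis using that by blast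
qed

lemma fund_weight_positive_root:
  assumes R: "root_system R" and B: "is_base R S" and h: "h \<in> pos_roots R S"
    and i: "i \<in> S" and x: "\<forall>a\<in>S. 0 \<le> pair x a"
  shows "0 \<le> pair (fund_weight S i) h \<and> pair (fund_weight S i) h * pair x i \<le> pair x h"
proof -
  obtain k where k: "\<forall>a\<in>S. 0 \<le> k a" "\<And>y. pair y h = (\<Sum>a\<in>S. k a * pair y a)"
    using positive_root_pair_expansion[OF R B h] by blast
  have fin: "finite S" using base_finite[OF R B] .
  have "pair (fund_weight S i) h = (\<Sum>a\<in>S. if a = i then k i else 0)"
    unfolding k(2) using fund_weight_pair[OF R B] by (intro sum.cong) auto
  then have \<omega>h: "pair (fund_weight S i) h = k i" using fin i by simp
  have "k i * pair x i \<le> (\<Sum>a\<in>S. k a * pair x a)"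
    by (rule member_le_sum) (use i fin k(1) x in auto)
  then show ?thesis using \<omega>h k i by simp
qed

lemma integral_on_add: "integral_on A x \<Longrightarrow> integral_on A y \<Longrightarrow> integral_on A (x + y)"
  unfolding integral_on_def by (simp add: pair_add)

lemma integral_on_diff: "integral_on A x \<Longrightarrow> integral_on A y \<Longrightarrow> integral_on A (x - y)"
  unfolding integral_on_def by (simp add: pair_diff)

lemma dominant_integral_on: "dominant S x \<Longrightarrow> integral_on S x"
  unfolding dominant_def integral_on_def using Nats_subset_Ints by blast

lemma fund_weight_integral_on:
  "root_system R \<Longrightarrow> is_base R S \<Longrightarrow> integral_on S (fund_weight S i)"
  unfolding integral_on_def by (simp add: fund_weight_pair)

text \<open>Integrality on the simple roots is preserved by orthogonal maps permuting the roots
  (such as Weyl group elements) and their inverses, via integrality on all roots.\<close>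

lemma integral_on_weyl:
  fixes w :: "'a::euclidean_space \<Rightarrow> 'a"
  assumes R: "root_system R" and B: "is_base R S"
    and w: "orthogonal_transformation w" "w ` R = R" and x: "integral_on S x"
  shows "integral_on S (w x)" and "integral_on S (inv w x)"
proof -
  have xR: "integral_on R x" using integral_on_roots[OF R B x] .
  have "integral_on R (w x)"
    using weyl_transfer[OF w, of "\<lambda>s t. s \<in> \<int>" x x] xR unfolding integral_on_def by simp
  moreover have "integral_on R (inv w x)"
    using xR w(2) unfolding integral_on_def pair_inv_orthogonal_transformation[OF w(1)] by blast
  ultimately show "integral_on S (w x)" "integral_on S (inv w x)"
    using base_subset[OF B] unfolding integral_on_def by blast+
qed

text \<open>Since
  min(x(h), y(h)) = ((x+y)(h) - |(x-y)(h)|)/2, the order \<preceq> compares the absolute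
  pairings of the differences x - y, and because these are even functions of the
  root it does not matter whether all roots or only the positive ones are used.\<close>

definition dominated :: "'a::real_inner set \<Rightarrow> 'a \<Rightarrow> 'a \<Rightarrow> bool" where
  "dominated R x y \<longleftrightarrow> (\<forall>g\<in>R. \<bar>pair x g\<bar> \<le> \<bar>pair y g\<bar>)"

lemma ball_roots_iff_positive:
  assumes R: "root_system R" and B: "is_base R S" and sym: "\<And>g. P (- g) \<longleftrightarrow> P g"
  shows "(\<forall>g\<in>R. P g) \<longleftrightarrow> (\<forall>h\<in>pos_roots R S. P h)"
  using pos_roots_subset root_pos_or_neg[OF R B] sym by blast

lemma pmin_common_sum:
  assumes "p1 + p2 = q1 + q2"
  shows "pmin (p1, p2) g \<le> pmin (q1, q2) g \<longleftrightarrow> \<bar>pair (q1 - q2) g\<bar> \<le> \<bar>pair (p1 - p2) g\<bar>"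
    and "pmin (p1, p2) g = pmin (q1, q2) g \<longleftrightarrow> \<bar>pair (q1 - q2) g\<bar> = \<bar>pair (p1 - p2) g\<bar>"
  unfolding pmin_eq assms by auto

lemma preceq_iff_dominated:
  assumes R: "root_system R" and B: "is_base R S" and sum: "p1 + p2 = q1 + q2"
  shows "preceq R S (p1, p2) (q1, q2) \<longleftrightarrow> dominated R (q1 - q2) (p1 - p2)"
  unfolding preceq_def dominated_def pmin_common_sum(1)[OF sum]
  by (rule ball_roots_iff_positive[OF R B, symmetric]) (simp add: pair_uminus_root)

lemma prec_iff_dominated:
  assumes R: "root_system R" and B: "is_base R S" and sum: "p1 + p2 = q1 + q2"
  shows "prec R S (p1, p2) (q1, q2) \<longleftrightarrow>
    dominated R (q1 - q2) (p1 - p2) \<and> (\<exists>g\<in>R. \<bar>pair (q1 - q2) g\<bar> < \<bar>pair (p1 - p2) g\<bar>)"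
proof -
  have "simeq R S (p1, p2) (q1, q2) \<longleftrightarrow> (\<forall>g\<in>R. \<bar>pair (q1 - q2) g\<bar> = \<bar>pair (p1 - p2) g\<bar>)"
    unfolding simeq_def pmin_common_sum(2)[OF sum]
    by (rule ball_roots_iff_positive[OF R B, symmetric]) (simp add: pair_uminus_root)
  then show ?thesis
    unfolding prec_def preceq_iff_dominated[OF R B sum] dominated_def
    by (auto simp: less_le)
qed

lemma dominated_weyl:
  assumes "orthogonal_transformation w" and "w ` R = R"
  shows "dominated R (w x) (w y) \<longleftrightarrow> dominated R x y"
  unfolding dominated_def using weyl_transfer[OF assms, of "\<lambda>s t. \<bar>s\<bar> \<le> \<bar>t\<bar>"] .

lemma strictly_dominated_weyl:
  assumes "orthogonal_transformation w" and "w ` R = R"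
  shows "(\<exists>g\<in>R. \<bar>pair (w x) g\<bar> < \<bar>pair (w y) g\<bar>) \<longleftrightarrow> (\<exists>g\<in>R. \<bar>pair x g\<bar> < \<bar>pair y g\<bar>)"
  using weyl_transfer[OF assms, of "\<lambda>s t. \<not> \<bar>s\<bar> < \<bar>t\<bar>" x y] by blast

lemma preceq_iff_dominated_weyl:
  assumes R: "root_system R" and B: "is_base R S"
    and w: "orthogonal_transformation w" "w ` R = R" and sum: "p1 + p2 = q1 + q2"
  shows "preceq R S (p1, p2) (q1, q2) \<longleftrightarrow> dominated R (w (q1 - q2)) (w (p1 - p2))"
  using preceq_iff_dominated[OF R B sum] dominated_weyl[OF w] by simp

lemma prec_iff_dominated_weyl:
  assumes R: "root_system R" and B: "is_base R S"
    and w: "orthogonal_transformation w" "w ` R = R" and sum: "p1 + p2 = q1 + q2"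
  shows "prec R S (p1, p2) (q1, q2) \<longleftrightarrow> dominated R (w (q1 - q2)) (w (p1 - p2)) \<and>
    (\<exists>g\<in>R. \<bar>pair (w (q1 - q2)) g\<bar> < \<bar>pair (w (p1 - p2)) g\<bar>)"
  using prec_iff_dominated[OF R B sum] dominated_weyl[OF w] strictly_dominated_weyl[OF w] by simp

lemma P2_of_preceq:
  assumes R: "root_system R" and B: "is_base R S"
    and p: "(p1, p2) \<in> P2 S l" and le: "preceq R S (p1, p2) (q1, q2)"
    and sum: "q1 + q2 = l" and int: "integral_on S q1" "integral_on S q2"
  shows "(q1, q2) \<in> P2 S l"
proof -
  have "pair q1 j \<in> \<nat> \<and> pair q2 j \<in> \<nat>" if j: "j \<in> S" for j
  proof -
    have "pair p1 j \<in> \<nat>" "pair p2 j \<in> \<nat>" using p j unfolding P2_def dominant_def by auto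
    then have "0 \<le> pmin (p1, p2) j" unfolding pmin_def using Nats_nonneg by simp
    also have "pmin (p1, p2) j \<le> pmin (q1, q2) j"
      using le simple_root_positive[OF R B j] unfolding preceq_def by blast
    finally have "0 \<le> pair q1 j" "0 \<le> pair q2 j" unfolding pmin_def by auto
    then show ?thesis using int j unfolding integral_on_def by (simp add: Nats_altdef2)
  qed
  then show ?thesis using sum unfolding P2_def dominant_def by auto
qed

lemma difference_identities:
  assumes lin: "linear w" and sums: "l1 + l2 = l" "m1 + m2 = l"
  shows "w (l1 - l2) = w (l1 - m1) + w (m1 - l2)"
    and "w (m1 - m2) = w (m1 - l2) - w (l1 - m1)"
    and "w ((l1 - v) - (l2 + v)) = w (l1 - m1) + w (m1 - l2) - 2 *\<^sub>R w v"
proof -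
  have "m2 = l1 + l2 - m1" using sums by (metis add_diff_cancel_left')
  then have e: "l1 - l2 = (l1 - m1) + (m1 - l2)" "m1 - m2 = (m1 - l2) - (l1 - m1)"
    "(l1 - v) - (l2 + v) = (l1 - m1) + (m1 - l2) - 2 *\<^sub>R v"
    by (simp_all add: algebra_simps scaleR_2)
  show "w (l1 - l2) = w (l1 - m1) + w (m1 - l2)"
    "w (m1 - m2) = w (m1 - l2) - w (l1 - m1)"
    "w ((l1 - v) - (l2 + v)) = w (l1 - m1) + w (m1 - l2) - 2 *\<^sub>R w v"
    unfolding e by (simp_all add: linear_add[OF lin] linear_diff[OF lin] linear_scale[OF lin])
qed

lemma abs_diff_le_abs_add_imp_mult_nonneg:
  "\<bar>(y::real) - x\<bar> \<le> \<bar>x + y\<bar> \<Longrightarrow> 0 \<le> x * y"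
  by (cases "0 \<le> x"; cases "0 \<le> y") (auto simp: abs_if split: if_splits intro: mult_nonpos_nonpos)

lemma mult_nonneg_add_nonneg_imp_nonneg:
  "0 \<le> (x::real) * y \<Longrightarrow> 0 \<le> x + y \<Longrightarrow> 0 \<le> x \<and> 0 \<le> y"
  by (smt (verit) mult_neg_pos mult_pos_neg)

lemma abs_shift_between:
  "0 \<le> (c::real) \<Longrightarrow> c \<le> x \<Longrightarrow> c \<le> y \<Longrightarrow>
    \<bar>y - x\<bar> \<le> \<bar>x + y - 2 * c\<bar> \<and> \<bar>x + y - 2 * c\<bar> \<le> \<bar>x + y\<bar>"
  by (simp add: abs_if)

lemma dominated_chamber:
  assumes dom: "dominated R (b - a) (a + b)" and S: "S \<subseteq> R" and nonneg: "\<forall>j\<in>S. 0 \<le> pair (a + b) j"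
  shows "\<forall>j\<in>S. 0 \<le> pair a j \<and> 0 \<le> pair b j"
proof
  fix j assume j: "j \<in> S"
  have "0 \<le> pair a j * pair b j"
    using dom S j unfolding dominated_def pair_add pair_diff
    by (blast intro: abs_diff_le_abs_add_imp_mult_nonneg)
  then show "0 \<le> pair a j \<and> 0 \<le> pair b j"
    using nonneg j mult_nonneg_add_nonneg_imp_nonneg unfolding pair_add by blast
qed

lemma shift_by_fund_weight:
  assumes R: "root_system R" and B: "is_base R S" and i: "i \<in> S"
    and dom: "dominated R (b - a) (a + b)" and dom_sum: "dominant S (a + b)"
    and int: "integral_on S a" "integral_on S b" and pos: "0 < pair a i * pair b i"
  defines "c \<equiv> a + b - 2 *\<^sub>R fund_weight S i"
  shows "dominated R (b - a) c \<and> dominated R c (a + b) \<and> \<bar>pair c i\<bar> < \<bar>pair (a + b) i\<bar>"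
proof -
  let ?\<omega> = "fund_weight S i"
  have "\<forall>j\<in>S. 0 \<le> pair (a + b) j" using dom_sum Nats_nonneg unfolding dominant_def by blast
  then have chamber: "\<forall>j\<in>S. 0 \<le> pair a j \<and> 0 \<le> pair b j"
    using dominated_chamber[OF dom base_subset[OF B]] by blast
  have ne: "pair a i \<noteq> 0" "pair b i \<noteq> 0" using pos by auto
  have "pair a i \<in> \<int>" "pair b i \<in> \<int>" using int i unfolding integral_on_def by blast+
  then have ab1: "1 \<le> pair a i" "1 \<le> pair b i" using ne chamber i by (auto elim!: Ints_cases)
  have bounds: "0 \<le> pair ?\<omega> h \<and> pair ?\<omega> h \<le> pair a h \<and> pair ?\<omega> h \<le> pair b h"
    if h: "h \<in> pos_roots R S" for h
  proof -
    have "0 \<le> pair ?\<omega> h \<and> pair ?\<omega> h * pair a i \<le> pair a h"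
      "0 \<le> pair ?\<omega> h \<and> pair ?\<omega> h * pair b i \<le> pair b h"
      using fund_weight_positive_root[OF R B h i] chamber by blast+
    moreover have "pair ?\<omega> h \<le> pair ?\<omega> h * pair a i" "pair ?\<omega> h \<le> pair ?\<omega> h * pair b i"
      if "0 \<le> pair ?\<omega> h" using ab1 that by (simp_all add: mult_le_cancel_left1)
    ultimately show ?thesis by linarith
  qed
  let ?P = "\<lambda>g. \<bar>pair (b - a) g\<bar> \<le> \<bar>pair c g\<bar> \<and> \<bar>pair c g\<bar> \<le> \<bar>pair (a + b) g\<bar>"
  have "\<forall>h\<in>pos_roots R S. ?P h"
  proof
    fix h assume "h \<in> pos_roots R S"
    with bounds abs_shift_between[of "pair ?\<omega> h" "pair a h" "pair b h"] show "?P h"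
      unfolding c_def pair_add pair_diff pair_scaleR by simp
  qed
  then have "\<forall>g\<in>R. ?P g"
    using ball_roots_iff_positive[OF R B, of ?P] by (simp add: pair_uminus_root)
  moreover have "pair ?\<omega> i = 1" using fund_weight_pair[OF R B i] by simp
  then have "\<bar>pair c i\<bar> < \<bar>pair (a + b) i\<bar>"
    using ab1 unfolding c_def pair_add pair_diff pair_scaleR by simp
  ultimately show ?thesis unfolding dominated_def by blast
qed

theorem proposition5p4:
  fixes R S :: "'a::euclidean_space set" and l l1 l2 m1 m2 :: 'a
    and w :: "'a \<Rightarrow> 'a" and i0 :: 'a
  assumes "root_system R" and "irreducible_rs R" and "is_base R S"
    and "dominant S l"
    and "(l1, l2) \<in> P2 S l" and "(m1, m2) \<in> P2 S l"
    and "prec R S (l1, l2) (m1, m2)"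
    and "w \<in> weyl_group R" and "i0 \<in> S"
    and "dominant S (w (l1 - l2))"
    and "pair (w (l1 - m1)) i0 * pair (w (m1 - l2)) i0 > 0"
  shows "(l1 - inv w (fund_weight S i0), l2 + inv w (fund_weight S i0)) \<in> P2 S l
    \<and> prec R S (l1, l2) (l1 - inv w (fund_weight S i0), l2 + inv w (fund_weight S i0))
    \<and> preceq R S (l1 - inv w (fund_weight S i0), l2 + inv w (fund_weight S i0)) (m1, m2)"
proof -
  note R = assms(1) and B = assms(3) and i0 = assms(9)
  obtain orth: "orthogonal_transformation w" and perm: "w ` R = R"
    using weyl_group_orthogonal[OF R assms(8)] by blast
  define \<omega> u a b where "\<omega> = fund_weight S i0" and "u = inv w \<omega>"
    and "a = w (l1 - m1)" and "b = w (m1 - l2)"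
  have sums: "l1 + l2 = l" "m1 + m2 = l" "(l1 - u) + (l2 + u) = l"
    and doms: "dominant S l1" "dominant S l2" "dominant S m1"
    using assms(5,6) unfolding P2_def by auto
  have "w u = \<omega>" unfolding u_def using orthogonal_transformation_surj[OF orth] by (simp add: surj_f_inv_f)
  then have diffs: "w (l1 - l2) = a + b" "w (m1 - m2) = b - a" "w ((l1 - u) - (l2 + u)) = a + b - 2 *\<^sub>R \<omega>"
    using difference_identities[OF orthogonal_transformation_linear[OF orth] sums(1,2)]
    unfolding a_def b_def by simp_all
  have ints: "integral_on S a" "integral_on S b"
    unfolding a_def b_def using doms
    by (simp_all add: integral_on_weyl(1)[OF R B orth perm] integral_on_diff dominant_integral_on)
  have "dominated R (b - a) (a + b)"
    using assms(7) prec_iff_dominated_weyl[OF R B orth perm] sums diffs by simp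
  moreover have "dominant S (a + b)" using assms(10) diffs(1) by simp
  moreover have "0 < pair a i0 * pair b i0" using assms(11) unfolding a_def b_def .
  ultimately have shift: "dominated R (b - a) (a + b - 2 *\<^sub>R \<omega>)"
    "dominated R (a + b - 2 *\<^sub>R \<omega>) (a + b)" "\<bar>pair (a + b - 2 *\<^sub>R \<omega>) i0\<bar> < \<bar>pair (a + b) i0\<bar>"
    using shift_by_fund_weight[OF R B i0 _ _ ints] unfolding \<omega>_def by blast+
  have "integral_on S (l1 - u)" "integral_on S (l2 + u)"
    using integral_on_weyl(2)[OF R B orth perm fund_weight_integral_on[OF R B]] doms
    unfolding u_def \<omega>_def by (simp_all add: integral_on_add integral_on_diff dominant_integral_on)
  moreover have "prec R S (l1, l2) (l1 - u, l2 + u)" "preceq R S (l1 - u, l2 + u) (m1, m2)"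
    using shift base_subset[OF B] i0 sums diffs prec_iff_dominated_weyl[OF R B orth perm]
      preceq_iff_dominated_weyl[OF R B orth perm] by auto
  ultimately show ?thesis
    using P2_of_preceq[OF R B assms(5)] sums(3) unfolding prec_def u_def \<omega>_def by blast
qed

end
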